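(* Let $\mathcal{I}$ be an ideal on $\omega$. Then (1) $\mathrm{FIN}\otimes\mathcal{I}\notin P^-$, and (2) $\rho^{(\mathrm{FIN}\otimes\mathcal{I})}\in P^-$ (for any choice of almost disjoint family $\mathcal{A}$ and enumeration of $(\mathrm{FIN}\otimes\mathcal{I})^+$ in its definition).
   Context: An ideal on a set $X$: $\mathcal{J}\subseteq\mathcal{P}(X)$ with $\emptyset\in\mathcal{J}$, $X\notin\mathcal{J}$, closed under finite unions and subsets, containing all finite sets; $\mathcal{J}^+=\mathcal{P}(X)\setminus\mathcal{J}$. $\mathrm{FIN}\otimes\mathcal{I}$ is the ideal on $\omega\times\omega$: $A\in\mathrm{FIN}\otimes\mathcal{I}$ iff $\{n:\{k:(n,k)\in A\}\notin\mathcal{I}\}$ is finite. Definition of $\rho^{(\mathrm{FIN}\otimes\mathcal{I})}$: let $\mathcal{A}=\{A_\alpha:\alpha<\mathfrak{c}\}$ be an almost disjoint family on $\omega$ (pairwise distinct infinite subsets of $\omega$ with pairwise finite intersections), $(\mathrm{FIN}\otimes\mathcal{I})^+=\{B_\alpha:\alpha<\mathfrak{c}\}$ an enumeration, $P_n=\{n\}\times\omega$, $\overline{\mathcal{A}}=\{A\setminus K:A\in\mathcal{A},K\in[\omega]^{<\omega}\}$, and $\rho^{(\mathrm{FIN}\otimes\mathcal{I})}\colon\overline{\mathcal{A}}\to[\omega\times\omega]^\omega$, $\rho^{(\mathrm{FIN}\otimes\mathcal{I})}(A_\alpha\setminus K)=B_\alpha\setminus\bigcup\{P_n:n<\max(K\cap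 A_\alpha)\}$, with $\max\emptyset=0$. This is a partition regular function (domain $\overline{\mathcal{A}}\subseteq[\omega]^\omega$, values in $[\omega\times\omega]^\omega$) with $\mathcal{I}_{\rho}=\mathrm{FIN}\otimes\mathcal{I}$. For a function $\rho\colon\mathcal{F}\to[\Lambda]^\omega$, $\mathcal{F}\subseteq[\Omega]^\omega$, let $\mathcal{I}_\rho=\{A\subseteq\Lambda:\forall F\in\mathcal{F}\ \rho(F)\not\subseteq A\}$; $\rho\in P^-$ means: for every decreasing $A_0\supseteq A_1\supseteq\dots$ of subsets of $\Lambda$ with $A_0\notin\mathcal{I}_\rho$ and $A_n\setminus A_{n+1}\in\mathcal{I}_\rho$ for all $n$, there is $F\in\mathcal{F}$ with $\rho(F)\subseteq A_0$ such that for each $n$ some finite $K\subseteq\Omega$ has $\rho(F\setminus K)\subseteq A_n$. For an ideal $\mathcal{J}$ on $\Lambda$, $\mathcal{J}\in P^-$ means: for every decreasing $A_0\supseteq A_1\supseteq\dots$ with $A_0\in\mathcal{J}^+$ and $A_n\setminus A_{n+1}\in\mathcal{J}$ there is $B\in\mathcal{J}^+$, $B\subseteq A_0$, with $B\setminus A_n$ finite for each $n$. *)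

theory Defs
  imports Main
begin

definition ideal_on :: "'a set \<Rightarrow> 'a set set \<Rightarrow> bool" where
  "ideal_on X J \<longleftrightarrow> J \<subseteq> Pow X \<and> {} \<in> J \<and> X \<notin> J
     \<and> (\<forall>A\<in>J. \<forall>B\<in>J. A \<union> B \<in> J)
     \<and> (\<forall>A\<in>J. \<forall>B. B \<subseteq> A \<longrightarrow> B \<in> J)
     \<and> (\<forall>F. F \<subseteq> X \<and> finite F \<longrightarrow> F \<in> J)"

definition positive :: "'a set set \<Rightarrow> 'a set set" where
  "positive J = UNIV - J"

definition FIN_tensor :: "nat set set \<Rightarrow> (nat \<times> nat) set set" where
  "FIN_tensor I = {A. finite {n. {k. (n, k) \<in> A} \<notin> I}}"

definition Pminus_ideal :: "'a set set \<Rightarrow> bool" where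
  "Pminus_ideal J \<longleftrightarrow>
    (\<forall>A :: nat \<Rightarrow> 'a set.
       (\<forall>n. A (Suc n) \<subseteq> A n) \<and> A 0 \<notin> J \<and> (\<forall>n. A n - A (Suc n) \<in> J)
       \<longrightarrow> (\<exists>B. B \<notin> J \<and> B \<subseteq> A 0 \<and> (\<forall>n. finite (B - A n))))"

definition I_rho :: "'a set set \<Rightarrow> ('a set \<Rightarrow> 'b set) \<Rightarrow> 'b set set" where
  "I_rho Fam rho = {A. \<forall>F\<in>Fam. \<not> rho F \<subseteq> A}"

definition Pminus_fun :: "'a set set \<Rightarrow> ('a set \<Rightarrow> 'b set) \<Rightarrow> bool" where
  "Pminus_fun Fam rho \<longleftrightarrow>
    (\<forall>A :: nat \<Rightarrow> 'b set.
       (\<forall>n. A (Suc n) \<subseteq> A n) \<and> A 0 \<notin> I_rho Fam rho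
       \<and> (\<forall>n. A n - A (Suc n) \<in> I_rho Fam rho)
       \<longrightarrow> (\<exists>F\<in>Fam. rho F \<subseteq> A 0 \<and>
              (\<forall>n. \<exists>K. finite K \<and> rho (F - K) \<subseteq> A n)))"

definition almost_disjoint_family :: "('k \<Rightarrow> nat set) \<Rightarrow> bool" where
  "almost_disjoint_family A \<longleftrightarrow> inj A \<and> (\<forall>a. infinite (A a))
     \<and> (\<forall>a b. a \<noteq> b \<longrightarrow> finite (A a \<inter> A b))"

definition Abar :: "('k \<Rightarrow> nat set) \<Rightarrow> nat set set" where
  "Abar A = {A a - K | a K. finite K}"

definition max0 :: "nat set \<Rightarrow> nat" where
  "max0 S = (if S = {} then 0 else Max S)"

definition column :: "nat \<Rightarrow> (nat \<times> nat) set" where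
  "column n = {n} \<times> UNIV"

text \<open>rho(A_alpha - K) = B_alpha - U{P_n : n < max(K cap A_alpha)}. Note
  K cap A_alpha = A_alpha - (A_alpha - K), so the value depends only on the set F.\<close>
definition rho_FIN :: "('k \<Rightarrow> nat set) \<Rightarrow> ('k \<Rightarrow> (nat \<times> nat) set) \<Rightarrow> nat set \<Rightarrow> (nat \<times> nat) set" where
  "rho_FIN A B F =
     (let a = (THE a. \<exists>K. finite K \<and> F = A a - K)
      in B a - \<Union>{column n | n. n < max0 (A a - F)})"

end

theory Submission
  imports Defs "HOL-Library.Infinite_Set"
begin

text \<open>
  (1) The tails \<open>T n = {p. n \<le> fst p}\<close> decrease with differences \<open>T n - T (n+1) = column n\<close>
  in \<open>FIN \<otimes> \<I>\<close>, but a positive set has an infinite fibre in some column \<open>m\<close>, so it is not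
  almost contained in \<open>T (m+1)\<close>.

  (2) The ideal \<open>\<I>\<^sub>\<rho>\<close> is \<open>FIN \<otimes> \<I>\<close>. Given a decreasing sequence \<open>C n\<close> of positive sets with
  differences in the ideal, choose in every \<open>C n\<close> a positive fibre in some column \<open>c n \<ge> n\<close>; the
  union \<open>D\<close> of these fibres is positive and \<open>D - C n\<close> lies in finitely many columns.
  Now \<open>D = B\<^sub>\<alpha>\<close> for some \<open>\<alpha>\<close>, and removing from \<open>A\<^sub>\<alpha>\<close> one point \<open>k\<close> beyond those columns
  cuts the columns below \<open>k\<close> off \<open>D\<close>, leaving a subset of \<open>C n\<close>.
\<close>

lemma ideal_onD:
  assumes "ideal_on X J"
  shows "X \<notin> J" "E \<in> J \<Longrightarrow> E' \<in> J \<Longrightarrow> E \<union> E' \<in> J" "E \<in> J \<Longrightarrow> E' \<subseteq> E \<Longrightarrow> E' \<in> J"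
    "finite E \<Longrightarrow> E \<subseteq> X \<Longrightarrow> E \<in> J"
  using assms unfolding ideal_on_def by blast+

lemma ideal_on_decreasing_notin:
  assumes J: "ideal_on X J" and dec: "\<And>n. C (Suc n) \<subseteq> C n"
    and C0: "C 0 \<notin> J" and diff: "\<And>n. C n - C (Suc n) \<in> J"
  shows "C n \<notin> J"
proof
  assume Cn: "C n \<in> J"
  have "C 0 - C n \<in> J"
  proof (induction n)
    case 0
    then show ?case using ideal_onD(3)[OF J diff[of 0]] by blast
  next
    case (Suc n)
    have "C 0 - C (Suc n) \<subseteq> (C 0 - C n) \<union> (C n - C (Suc n))" by blast
    then show ?case using ideal_onD(2,3)[OF J] Suc diff by metis
  qed
  then have "C n \<union> (C 0 - C n) \<in> J" using ideal_onD(2)[OF J Cn] by blast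
  then show False using ideal_onD(3)[OF J] C0 by blast
qed

lemma I_rho_eq_ideal:
  assumes J: "ideal_on UNIV J"
    and values_notin: "\<And>F. F \<in> Fam \<Longrightarrow> rho F \<notin> J"
    and notin_has_value: "\<And>X. X \<notin> J \<Longrightarrow> \<exists>F\<in>Fam. rho F \<subseteq> X"
  shows "I_rho Fam rho = J"
proof -
  have "X \<in> I_rho Fam rho \<longleftrightarrow> X \<in> J" for X
    using notin_has_value[of X] values_notin ideal_onD(3)[OF J, of X] unfolding I_rho_def by blast
  then show ?thesis by blast
qed

definition fibre :: "(nat \<times> nat) set \<Rightarrow> nat \<Rightarrow> nat set" where
  "fibre X m = {k. (m, k) \<in> X}"

lemma FIN_tensor_iff: "X \<in> FIN_tensor I \<longleftrightarrow> finite {m. fibre X m \<notin> I}"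
  by (simp add: FIN_tensor_def fibre_def)

lemma ideal_on_FIN_tensor:
  assumes I: "ideal_on UNIV I"
  shows "ideal_on UNIV (FIN_tensor I)"
proof -
  have mono: "X \<in> FIN_tensor I" if "X \<subseteq> Y" "Y \<in> FIN_tensor I" for X Y
  proof -
    have "fibre X m \<subseteq> fibre Y m" for m
      using that(1) unfolding fibre_def by blast
    then have "{m. fibre X m \<notin> I} \<subseteq> {m. fibre Y m \<notin> I}"
      using ideal_onD(3)[OF I] by blast
    then show ?thesis using that(2) finite_subset unfolding FIN_tensor_iff by blast
  qed
  have Un: "X \<union> Y \<in> FIN_tensor I" if "X \<in> FIN_tensor I" "Y \<in> FIN_tensor I" for X Y
  proof -
    have "fibre (X \<union> Y) m = fibre X m \<union> fibre Y m" for m unfolding fibre_def by auto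
    then have "{m. fibre (X \<union> Y) m \<notin> I} \<subseteq> {m. fibre X m \<notin> I} \<union> {m. fibre Y m \<notin> I}"
      using ideal_onD(2)[OF I] by auto
    then show ?thesis using that finite_subset unfolding FIN_tensor_iff by blast
  qed
  have fin: "F \<in> FIN_tensor I" if "finite F" for F
  proof -
    have "fibre F m \<subseteq> snd ` F" for m
      unfolding fibre_def by force
    then have "finite (fibre F m)" for m
      using finite_imageI[OF that] finite_subset by blast
    then show ?thesis using ideal_onD(4)[OF I] unfolding FIN_tensor_iff by simp
  qed
  have "fibre UNIV m = UNIV" for m unfolding fibre_def by simp
  then have "UNIV \<notin> FIN_tensor I" using ideal_onD(1)[OF I] unfolding FIN_tensor_iff by simp
  with fin[of "{}"] show ?thesis
    unfolding ideal_on_def by (blast intro: mono Un fin)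
qed

lemma FIN_tensor_if_finite_fst_image:
  assumes I: "ideal_on UNIV I" and fin: "finite (fst ` X)"
  shows "X \<in> FIN_tensor I"
proof -
  have "{m. fibre X m \<notin> I} \<subseteq> fst ` X"
  proof
    fix m assume "m \<in> {m. fibre X m \<notin> I}"
    then have "fibre X m \<noteq> {}" using ideal_onD(4)[OF I, of "{}"] by auto
    then obtain k where "(m, k) \<in> X" unfolding fibre_def by blast
    then show "m \<in> fst ` X" by (rule rev_image_eqI) simp
  qed
  then show ?thesis using fin finite_subset unfolding FIN_tensor_iff by blast
qed

lemma column_in_FIN_tensor:
  assumes "ideal_on UNIV I"
  shows "column n \<in> FIN_tensor I"
  using FIN_tensor_if_finite_fst_image[OF assms] by (simp add: column_def fst_image_times)

lemma not_Pminus_ideal_FIN_tensor: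
  assumes I: "ideal_on UNIV I"
  shows "\<not> Pminus_ideal (FIN_tensor I)"
proof
  assume P: "Pminus_ideal (FIN_tensor I)"
  define T :: "nat \<Rightarrow> (nat \<times> nat) set" where "T n = {p. n \<le> fst p}" for n
  have "T 0 \<notin> FIN_tensor I"
    using ideal_onD(1)[OF ideal_on_FIN_tensor[OF I]] by (simp add: T_def)
  moreover have "T n - T (Suc n) \<in> FIN_tensor I" for n
  proof -
    have "T n - T (Suc n) = column n" by (auto simp: T_def column_def)
    then show ?thesis using column_in_FIN_tensor[OF I] by simp
  qed
  moreover have "T (Suc n) \<subseteq> T n" for n by (auto simp: T_def)
  ultimately obtain D where D: "D \<notin> FIN_tensor I" "\<And>n. finite (D - T n)"
    using spec[OF P[unfolded Pminus_ideal_def], of T] by blast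
  obtain m where m: "fibre D m \<notin> I"
    using D(1) not_finite_existsD unfolding FIN_tensor_iff by blast
  have "fibre D m \<subseteq> snd ` (D - T (Suc m))"
  proof
    fix k assume "k \<in> fibre D m"
    then have "(m, k) \<in> D - T (Suc m)" by (simp add: fibre_def T_def)
    then show "k \<in> snd ` (D - T (Suc m))" by (rule rev_image_eqI) simp
  qed
  then have "finite (fibre D m)" using D(2) finite_subset by blast
  then show False using m ideal_onD(4)[OF I] by blast
qed

lemma FIN_tensor_diagonal_set:
  assumes I: "ideal_on UNIV I" and dec: "\<And>n. C (Suc n) \<subseteq> C n"
    and pos: "\<And>n. C n \<notin> FIN_tensor I"
  obtains D where "D \<notin> FIN_tensor I" "D \<subseteq> C 0" "\<And>n. finite (fst ` (D - C n))"
proof -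
  have "\<exists>m\<ge>n. fibre (C n) m \<notin> I" for n
    using pos[of n] unfolding FIN_tensor_iff infinite_nat_iff_unbounded_le by blast
  then obtain c where c: "\<And>n. n \<le> c n" "\<And>n. fibre (C n) (c n) \<notin> I" by metis
  define D where "D = (\<Union>n. C n \<inter> column (c n))"
  have antimono: "C n \<subseteq> C m" if "m \<le> n" for m n
    using dec that by (metis lift_Suc_antimono_le)
  have "fibre (C n) (c n) \<subseteq> fibre D (c n)" for n
    unfolding fibre_def D_def column_def by auto
  then have "range c \<subseteq> {m. fibre D m \<notin> I}"
    using c(2) ideal_onD(3)[OF I] by blast
  moreover have "infinite (range c)"
    using c(1) unfolding infinite_nat_iff_unbounded_le by blast
  ultimately have "D \<notin> FIN_tensor I" unfolding FIN_tensor_iff using finite_subset by blast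
  moreover have "D \<subseteq> C 0" unfolding D_def using antimono by blast
  moreover have "finite (fst ` (D - C n))" for n
  proof -
    have "fst ` (D - C n) \<subseteq> c ` {..<n}"
    proof
      fix m assume "m \<in> fst ` (D - C n)"
      then obtain j p where p: "p \<in> C j" "p \<in> column (c j)" "p \<notin> C n" "m = fst p"
        unfolding D_def by blast
      then have "j < n" using antimono[of n j] by (meson not_less subsetD)
      moreover have "m = c j" using p(2,4) by (simp add: column_def mem_Times_iff)
      ultimately show "m \<in> c ` {..<n}" by blast
    qed
    then show ?thesis using finite_subset by blast
  qed
  ultimately show thesis using that by blast
qed

lemma Union_columns_below: "\<Union>{column n | n. n < k} = {p. fst p < k}"
proof (intro equalityI subsetI)
  fix p :: "nat \<times> nat" assume "p \<in> {p. fst p < k}"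
  then show "p \<in> \<Union>{column n | n. n < k}"
    unfolding column_def by (intro UnionI[of "{fst p} \<times> UNIV"]) (auto simp: mem_Times_iff)
qed (auto simp: column_def)

lemma rho_FIN_eq:
  assumes ad: "almost_disjoint_family A" and K: "finite K"
  shows "rho_FIN A B (A a - K) = B a - {p. fst p < max0 (A a \<inter> K)}"
proof -
  have "(THE b. \<exists>K'. finite K' \<and> A a - K = A b - K') = a"
  proof (rule the_equality)
    fix b assume "\<exists>K'. finite K' \<and> A a - K = A b - K'"
    then obtain K' where "A a - K = A b - K'" by blast
    then have "A a \<subseteq> (A a \<inter> A b) \<union> K" by blast
    then show "b = a"
      using ad K finite_subset unfolding almost_disjoint_family_def by (metis finite_Un)
  qed (use K in blast)
  moreover have "A a - (A a - K) = A a \<inter> K" by blast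
  ultimately show ?thesis unfolding rho_FIN_def Let_def Union_columns_below by simp
qed

lemma range_eq_Compl_if_bij_betw_positive:
  "bij_betw B UNIV (positive J) \<Longrightarrow> range B = - J"
  by (simp add: bij_betw_def positive_def Compl_eq_Diff_UNIV)

lemma rho_FIN_notin_FIN_tensor:
  assumes I: "ideal_on UNIV I" and ad: "almost_disjoint_family A"
    and B: "bij_betw B UNIV (positive (FIN_tensor I))" and F: "F \<in> Abar A"
  shows "rho_FIN A B F \<notin> FIN_tensor I"
proof
  obtain a K where aK: "F = A a - K" "finite K" using F unfolding Abar_def by blast
  define k where "k = max0 (A a \<inter> K)"
  assume "rho_FIN A B F \<in> FIN_tensor I"
  then have "B a - {p. fst p < k} \<in> FIN_tensor I"
    using rho_FIN_eq[OF ad aK(2)] aK(1) by (simp add: k_def)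
  moreover have "{p. fst p < k} \<in> FIN_tensor I"
    by (rule FIN_tensor_if_finite_fst_image[OF I]) (auto intro: finite_subset[of _ "{..<k}"])
  ultimately have "B a \<in> FIN_tensor I"
    using ideal_onD(2,3)[OF ideal_on_FIN_tensor[OF I]] by (metis Un_Diff_cancel2 sup_ge1)
  then show False using range_eq_Compl_if_bij_betw_positive[OF B] by (metis ComplD rangeI)
qed

lemma I_rho_rho_FIN:
  assumes I: "ideal_on UNIV I" and ad: "almost_disjoint_family A"
    and B: "bij_betw B UNIV (positive (FIN_tensor I))"
  shows "I_rho (Abar A) (rho_FIN A B) = FIN_tensor I"
proof (rule I_rho_eq_ideal[OF ideal_on_FIN_tensor[OF I] rho_FIN_notin_FIN_tensor[OF I ad B]])
  fix X assume "X \<notin> FIN_tensor I"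
  then have "X \<in> range B" using range_eq_Compl_if_bij_betw_positive[OF B] by simp
  then obtain a where "B a = X" by blast
  moreover have "A a - {} \<in> Abar A" unfolding Abar_def by blast
  ultimately show "\<exists>F\<in>Abar A. rho_FIN A B F \<subseteq> X"
    using rho_FIN_eq[OF ad, of "{}" B a] by (auto simp: max0_def)
qed

lemma Pminus_fun_rho_FIN:
  assumes I: "ideal_on UNIV I" and ad: "almost_disjoint_family A"
    and B: "bij_betw B UNIV (positive (FIN_tensor I))"
  shows "Pminus_fun (Abar A) (rho_FIN A B)"
  unfolding Pminus_fun_def I_rho_rho_FIN[OF I ad B]
proof clarify
  fix C :: "nat \<Rightarrow> (nat \<times> nat) set"
  assume dec: "\<forall>n. C (Suc n) \<subseteq> C n" and C0: "C 0 \<notin> FIN_tensor I"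
    and diff: "\<forall>n. C n - C (Suc n) \<in> FIN_tensor I"
  have "C n \<notin> FIN_tensor I" for n
    using ideal_on_decreasing_notin[OF ideal_on_FIN_tensor[OF I]] dec C0 diff by blast
  then obtain D where D: "D \<notin> FIN_tensor I" "D \<subseteq> C 0" "\<And>n. finite (fst ` (D - C n))"
    using FIN_tensor_diagonal_set[OF I] dec by metis
  then have "D \<in> range B" using range_eq_Compl_if_bij_betw_positive[OF B] by simp
  then obtain a where a: "B a = D" by blast
  have "A a - {} \<in> Abar A" unfolding Abar_def by blast
  moreover have "rho_FIN A B (A a - {}) \<subseteq> C 0"
    using rho_FIN_eq[OF ad, of "{}" B a] a D(2) by (simp add: max0_def)
  moreover have "\<exists>K. finite K \<and> rho_FIN A B (A a - {} - K) \<subseteq> C n" for n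
  proof -
    have "infinite (A a)" using ad unfolding almost_disjoint_family_def by blast
    moreover obtain M where M: "\<forall>m \<in> fst ` (D - C n). m < M"
      using D(3)[of n] finite_nat_set_iff_bounded by blast
    ultimately obtain k where k: "k \<in> A a" "M \<le> k"
      unfolding infinite_nat_iff_unbounded_le by blast
    have "rho_FIN A B (A a - {k}) = D - {p. fst p < k}"
      using rho_FIN_eq[OF ad, of "{k}" B a] a k(1) by (simp add: max0_def)
    also have "\<dots> \<subseteq> C n"
    proof
      fix p assume p: "p \<in> D - {p. fst p < k}"
      show "p \<in> C n"
      proof (rule ccontr)
        assume "p \<notin> C n"
        then have "fst p < M" using M p by blast
        then show False using p k(2) by simp
      qed
    qed
    finally show ?thesis by (intro exI[of _ "{k}"]) simp
  qed
  ultimately show "\<exists>F\<in>Abar A. rho_FIN A B F \<subseteq> C 0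
      \<and> (\<forall>n. \<exists>K. finite K \<and> rho_FIN A B (F - K) \<subseteq> C n)" by blast
qed

theorem proposition5p3:
  fixes I :: "nat set set"
    and A :: "'k \<Rightarrow> nat set"
    and B :: "'k \<Rightarrow> (nat \<times> nat) set"
  assumes "ideal_on UNIV I"
  shows "\<not> Pminus_ideal (FIN_tensor I)
    \<and> (almost_disjoint_family A \<and> bij_betw B UNIV (positive (FIN_tensor I))
        \<longrightarrow> Pminus_fun (Abar A) (rho_FIN A B))"
  using not_Pminus_ideal_FIN_tensor[OF assms] Pminus_fun_rho_FIN[OF assms] by blast

end
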